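(* Let $a,b,c$ be symbols of rank $0$, $1$ and $2$, respectively. There is a family of trees $(t_n)_{n\ge1}$ with all labels in $\{a,b,c\}$ and a constant $C>0$ such that: $|t_n|\in\Theta(n)$; for every $n$ and every subtree $s$ of $t_n$ (rooted at any node), the depth of $s$ is at most $C\log_2(|s|+1)$; and the minimal dag of $t_n$ has $\Omega\big(\frac{n\log\log n}{\log n}\big)$ nodes.
   Context: Trees are finite rooted ordered trees whose nodes are labelled by ranked symbols, a node labelled by a symbol of rank $k$ having exactly $k$ ordered children; $|t|$ is the number of nodes and the depth is the maximal number of edges on a root-to-leaf path. The minimal dag of a tree has one node for each isomorphism class (as labelled ordered trees) of subtrees; its size is its number of nodes. *)

theory Defs
  imports Complex_Main "HOL-Library.Landau_Symbols"
begin

text \<open>Ranked trees over the alphabet {a,b,c} with rank a = 0, rank b = 1, rank c = 2.\<close>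
datatype rtree = La | Lb rtree | Lc rtree rtree

fun tsize :: "rtree \<Rightarrow> nat" where
  "tsize La = 1"
| "tsize (Lb t) = tsize t + 1"
| "tsize (Lc t u) = tsize t + tsize u + 1"

fun depth :: "rtree \<Rightarrow> nat" where
  "depth La = 0"
| "depth (Lb t) = depth t + 1"
| "depth (Lc t u) = max (depth t) (depth u) + 1"

text \<open>The set of subtrees (rooted at any node, including the tree itself).
  Trees are identified up to equality of terms, i.e. up to isomorphism of
  labelled ordered trees.\<close>
fun subtrees :: "rtree \<Rightarrow> rtree set" where
  "subtrees La = {La}"
| "subtrees (Lb t) = insert (Lb t) (subtrees t)"
| "subtrees (Lc t u) = insert (Lc t u) (subtrees t \<union> subtrees u)"

text \<open>Size of the minimal dag: number of isomorphism classes of subtrees.\<close>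
definition dag_size :: "rtree \<Rightarrow> nat" where
  "dag_size t = card (subtrees t)"

end

theory Submission
  imports Defs "HOL-Library.Discrete_Functions" "HOL-Real_Asymp.Real_Asymp"
begin

(* For parameters d and H let T(d,H) be the perfect binary tree of height H
   whose 2^H leaves are gadgets G(d,i), i < 2^H.  The gadget G(d,i) is a spine of d unary
   b-nodes above a perfect binary tree of height d whose 2^d leaves spell out the 2^d
   lowest bits of i (a bit is the leaf b(b(a)) or c(a,a)).  Then
   - all gadgets have the same size d + 2^(d+2) - 1, so |T(d,H)| + 1 = 2^H (d + 2^(d+2));
   - every subtree s satisfies depth s <= 2e for some e with 2^e <= |s| + 1
     ("balanced"), hence depth s <= 2 log2 (|s| + 1);
   - if H <= 2^d the gadgets are pairwise distinct, and so are the d+1 spine suffixes of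
     each gadget, giving at least 2^H (d+1) distinct subtrees.
   Choosing k = floor_log n, d = floor_log k + 1 and H = k - d - 3 gives |t_n| in Theta(n)
   and a dag of size >= 2^H (d+1) >= n log2 (log2 n - 1) / (32 log2 n). *)

lemma subtrees_refl: "t \<in> subtrees t"
  by (cases t) auto

lemma subtrees_trans: "s \<in> subtrees t \<Longrightarrow> subtrees s \<subseteq> subtrees t"
  by (induction t) auto

lemma finite_subtrees: "finite (subtrees t)"
  by (induction t) auto

lemma dag_size_ge_card:
  assumes "S \<subseteq> subtrees t"
  shows "card S \<le> dag_size t"
  unfolding dag_size_def by (rule card_mono[OF finite_subtrees assms])

section \<open>Balanced trees\<close>

definition balanced :: "rtree \<Rightarrow> bool" where
  "balanced s \<longleftrightarrow> (\<exists>e. 2^e \<le> tsize s + 1 \<and> depth s \<le> 2*e)"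

lemma balancedI: "2^e \<le> tsize s + 1 \<Longrightarrow> depth s \<le> 2*e \<Longrightarrow> balanced s"
  unfolding balanced_def by blast

lemma balanced_depth_log:
  assumes "balanced s"
  shows "real (depth s) \<le> 2 * log 2 (real (tsize s) + 1)"
proof -
  obtain e where e: "2^e \<le> tsize s + 1" "depth s \<le> 2*e"
    using assms unfolding balanced_def by blast
  have "real e \<le> log 2 (real (tsize s) + 1)"
    using le_log2_of_power[OF e(1)] by (simp add: add.commute)
  then show ?thesis using e(2) by linarith
qed

section \<open>Perfect binary trees with prescribed leaves\<close>

fun perfect :: "nat \<Rightarrow> (nat \<Rightarrow> rtree) \<Rightarrow> nat \<Rightarrow> rtree" where
  "perfect 0 leaf off = leaf off"
| "perfect (Suc h) leaf off = Lc (perfect h leaf off) (perfect h leaf (off + 2^h))"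

lemma tsize_perfect:
  assumes "\<And>i. tsize (leaf i) + 1 = L"
  shows "tsize (perfect h leaf off) + 1 = 2^h * L"
proof (induction h arbitrary: off)
  case 0
  then show ?case using assms by simp
next
  case (Suc h)
  have "tsize (perfect (Suc h) leaf off) + 1
      = (tsize (perfect h leaf off) + 1) + (tsize (perfect h leaf (off + 2^h)) + 1)"
    by simp
  also have "\<dots> = 2^Suc h * L" using Suc.IH by simp
  finally show ?case .
qed

lemma depth_perfect:
  assumes "\<And>i. depth (leaf i) \<le> D"
  shows "depth (perfect h leaf off) \<le> h + D"
  using assms by (induction h arbitrary: off) (auto simp: max_def)

text \<open>If the leaves have uniform size \<open>L \<ge> 2^a\<close>, depth at most \<open>2a\<close> and only balanced
  subtrees, then all subtrees of the perfect tree are balanced: a node of height \<open>h\<close>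
  has size \<open>\<ge> 2^(h+a) - 1\<close> and depth \<open>\<le> h + 2a\<close>.\<close>

lemma balanced_perfect:
  assumes size: "\<And>i. tsize (leaf i) + 1 = L" and "2^a \<le> L"
    and depth: "\<And>i. depth (leaf i) \<le> 2*a"
    and leaves: "\<And>i s. s \<in> subtrees (leaf i) \<Longrightarrow> balanced s"
  shows "s \<in> subtrees (perfect h leaf off) \<Longrightarrow> balanced s"
proof (induction h arbitrary: off)
  case 0
  then show ?case using leaves by simp
next
  case (Suc h)
  show ?case
  proof (cases "s = perfect (Suc h) leaf off")
    case True
    have "(2::nat)^(Suc h + a) \<le> 2^Suc h * L"
      using \<open>2^a \<le> L\<close> by (simp add: power_add)
    then have "2^(Suc h + a) \<le> tsize s + 1"
      using True tsize_perfect[OF size, where h = "Suc h" and off = off] by (simp only:)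
    moreover have "depth s \<le> 2 * (Suc h + a)"
      using True depth_perfect[of leaf "2*a" "Suc h" off] depth by simp
    ultimately show ?thesis by (rule balancedI)
  next
    case False
    then have "s \<in> subtrees (perfect h leaf off) \<union> subtrees (perfect h leaf (off + 2^h))"
      using Suc.prems by simp
    then show ?thesis using Suc.IH by blast
  qed
qed

lemma leaf_in_perfect:
  "k < 2^h \<Longrightarrow> leaf (off + k) \<in> subtrees (perfect h leaf off)"
proof (induction h arbitrary: off k)
  case 0
  then show ?case by (simp add: subtrees_refl)
next
  case (Suc h)
  show ?case
  proof (cases "k < 2^h")
    case True
    then show ?thesis using Suc.IH[of k off] by simp
  next
    case False
    then have "k - 2^h < 2^h" "off + 2^h + (k - 2^h) = off + k"
      using Suc.prems by auto
    then show ?thesis using Suc.IH[of "k - 2^h" "off + 2^h"] by simp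
  qed
qed

lemma perfect_leaves_eq:
  "perfect h leaf off = perfect h leaf' off \<Longrightarrow> k < 2^h \<Longrightarrow> leaf (off + k) = leaf' (off + k)"
proof (induction h arbitrary: off k)
  case 0
  then show ?case by simp
next
  case (Suc h)
  show ?case
  proof (cases "k < 2^h")
    case True
    then show ?thesis using Suc by simp
  next
    case False
    then have "k - 2^h < 2^h" "off + 2^h + (k - 2^h) = off + k"
      using Suc.prems by auto
    then show ?thesis using Suc.IH[of "off + 2^h" "k - 2^h"] Suc.prems(1) by simp
  qed
qed

fun spine :: "nat \<Rightarrow> rtree \<Rightarrow> rtree" where
  "spine 0 t = t"
| "spine (Suc j) t = Lb (spine j t)"

lemma tsize_spine: "tsize (spine j t) = j + tsize t"
  by (induction j) auto

lemma depth_spine: "depth (spine j t) = j + depth t"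
  by (induction j) auto

lemma spine_in_subtrees: "i \<le> j \<Longrightarrow> spine i t \<in> subtrees (spine j t)"
  by (induction j) (auto simp: le_Suc_eq subtrees_refl)

lemma spine_inj:
  assumes "spine j t = spine j' t'" "tsize t = tsize t'"
  shows "j = j' \<and> t = t'"
proof -
  have "j = j'" using arg_cong[OF assms(1), of tsize] assms(2) by (simp add: tsize_spine)
  moreover have "spine j t = spine j t' \<Longrightarrow> t = t'" by (induction j) auto
  ultimately show ?thesis using assms(1) by simp
qed

lemma balanced_spine:
  assumes "\<And>s. s \<in> subtrees t \<Longrightarrow> balanced s" "2^a \<le> tsize t + 1" "j + depth t \<le> 2*a"
  shows "s \<in> subtrees (spine j t) \<Longrightarrow> balanced s"
  using assms(3)
proof (induction j)
  case 0
  then show ?case using assms(1) by simp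
next
  case (Suc j)
  have "balanced (spine (Suc j) t)"
    using assms(2) Suc.prems(2) by (intro balancedI[of a]) (simp_all add: tsize_spine depth_spine)
  then show ?case using Suc by auto
qed

section \<open>Gadgets\<close>

definition bitleaf :: "bool \<Rightarrow> rtree" where
  "bitleaf b = (if b then Lb (Lb La) else Lc La La)"

lemma bitleaf_inj: "bitleaf b = bitleaf b' \<Longrightarrow> b = b'"
  by (auto simp: bitleaf_def split: if_splits)

lemma balanced_bitleaf: "s \<in> subtrees (bitleaf b) \<Longrightarrow> balanced s"
  by (cases b) (auto simp: bitleaf_def intro: balancedI[of 1])

text \<open>\<open>code d i\<close> spells out the \<open>2^d\<close> lowest bits of \<open>i\<close>; the gadget adds a spine of
  length \<open>d\<close> on top, whose \<open>d + 1\<close> suffixes all become distinct dag nodes.\<close>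

definition code :: "nat \<Rightarrow> nat \<Rightarrow> rtree" where
  "code d i = perfect d (\<lambda>k. bitleaf (bit i k)) 0"

definition gadget :: "nat \<Rightarrow> nat \<Rightarrow> rtree" where
  "gadget d i = spine d (code d i)"

lemma tsize_code: "tsize (code d i) + 1 = 2^(d+2)"
proof -
  have "tsize (code d i) + 1 = 2^d * 4"
    unfolding code_def by (rule tsize_perfect) (simp add: bitleaf_def)
  then show ?thesis by (simp add: power_add)
qed

lemma depth_code: "depth (code d i) \<le> d + 2"
  unfolding code_def by (rule depth_perfect) (simp add: bitleaf_def)

lemma balanced_code: "s \<in> subtrees (code d i) \<Longrightarrow> balanced s"
  unfolding code_def
  by (rule balanced_perfect[where L = 4 and a = 1]) (auto simp: bitleaf_def balanced_bitleaf)

lemma code_inj: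
  assumes "code d i = code d i'" "i < 2^(2^d)" "i' < 2^(2^d)"
  shows "i = i'"
proof -
  have "bit i k = bit i' k" if "k < 2^d" for k
    using perfect_leaves_eq[OF assms(1)[unfolded code_def] that] bitleaf_inj by simp
  then have "take_bit (2^d) i = take_bit (2^d) i'"
    by (auto simp: bit_eq_iff bit_take_bit_iff)
  then show ?thesis using assms(2,3) by (simp add: take_bit_nat_eq_self)
qed

lemma tsize_gadget: "tsize (gadget d i) + 1 = d + 2^(d+2)"
  using tsize_code[of d i] by (simp add: gadget_def tsize_spine)

lemma depth_gadget: "depth (gadget d i) \<le> 2 * (d + 2)"
  using depth_code[of d i] by (simp add: gadget_def depth_spine)

lemma balanced_gadget: "s \<in> subtrees (gadget d i) \<Longrightarrow> balanced s"
  unfolding gadget_def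
proof (rule balanced_spine[where a = "d + 2"])
  show "2^(d+2) \<le> tsize (code d i) + 1" using tsize_code by simp
  show "d + depth (code d i) \<le> 2 * (d + 2)" using depth_code[of d i] by simp
qed (rule balanced_code)

definition tree :: "nat \<Rightarrow> nat \<Rightarrow> rtree" where
  "tree d H = perfect H (gadget d) 0"

lemma tsize_tree: "tsize (tree d H) + 1 = 2^H * (d + 2^(d+2))"
  unfolding tree_def by (rule tsize_perfect[OF tsize_gadget])

lemma balanced_tree: "s \<in> subtrees (tree d H) \<Longrightarrow> balanced s"
  unfolding tree_def
  by (rule balanced_perfect[OF tsize_gadget _ depth_gadget balanced_gadget]) simp_all

text \<open>For \<open>H \<le> 2^d\<close> the spine suffixes \<open>spine j (code d i)\<close>, \<open>i < 2^H\<close>, \<open>j \<le> d\<close>, are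
  pairwise distinct subtrees of \<open>T(d,H)\<close>.\<close>

lemma dag_size_tree:
  assumes "H \<le> 2^d"
  shows "2^H * (d + 1) \<le> dag_size (tree d H)"
proof -
  define f where "f = (\<lambda>(i, j). spine j (code d i))"
  define I where "I = {..<(2::nat)^H} \<times> {..d}"
  have "f ` I \<subseteq> subtrees (tree d H)"
  proof clarify
    fix i j assume "(i, j) \<in> I"
    then have "i < 2^H" "j \<le> d" by (auto simp: I_def)
    have "gadget d i \<in> subtrees (tree d H)"
      using leaf_in_perfect[OF \<open>i < 2^H\<close>, of "gadget d" 0] by (simp add: tree_def)
    moreover have "f (i, j) \<in> subtrees (gadget d i)"
      unfolding f_def gadget_def using spine_in_subtrees[OF \<open>j \<le> d\<close>] by simp
    ultimately show "f (i, j) \<in> subtrees (tree d H)" using subtrees_trans by blast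
  qed
  moreover have "inj_on f I"
  proof (rule inj_onI, clarify)
    fix i j i' j' assume "(i, j) \<in> I" "(i', j') \<in> I" "f (i, j) = f (i', j')"
    moreover have "tsize (code d i) = tsize (code d i')"
      using tsize_code[of d i] tsize_code[of d i'] by simp
    ultimately have "j = j'" "code d i = code d i'" "i < 2^H" "i' < 2^H"
      using spine_inj[of j "code d i" j' "code d i'"] by (auto simp: f_def I_def)
    moreover have "(2::nat)^H \<le> 2^(2^d)" using assms by simp
    ultimately have "i < 2^(2^d)" "i' < 2^(2^d)" "j = j'" "code d i = code d i'"
      by linarith+
    then show "i = i' \<and> j = j'" using code_inj by blast
  qed
  then have "card (f ` I) = 2^H * (d + 1)" by (simp add: card_image I_def card_cartesian_product)
  ultimately show ?thesis using dag_size_ge_card by metis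
qed

section \<open>Choice of the parameters\<close>

text \<open>With \<open>k = floor_log n\<close> we take gadgets of height \<open>d = floor_log k + 1\<close> (so that
  \<open>k < 2^d \<le> 2k\<close>) and a top tree of height \<open>H = k - d - 3\<close>.\<close>

definition gadget_height :: "nat \<Rightarrow> nat" where
  "gadget_height n = Suc (floor_log (floor_log n))"

definition top_height :: "nat \<Rightarrow> nat" where
  "top_height n = floor_log n - (gadget_height n + 3)"

definition family :: "nat \<Rightarrow> rtree" where
  "family n = tree (gadget_height n) (top_height n)"

text \<open>The heights fit: \<open>d + 3 \<le> k\<close> once \<open>k \<ge> 8\<close>, and \<open>H \<le> 2^d\<close> so that gadgets are distinct.\<close>

lemma floor_log_plus_4_le: "8 \<le> k \<Longrightarrow> floor_log k + 4 \<le> k"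
proof -
  assume "8 \<le> k"
  have "m + 4 \<le> 2^m" if "3 \<le> m" for m :: nat
    using that by (induction m rule: dec_induct) simp_all
  moreover have "3 \<le> floor_log k"
    using floor_log_le_iff[OF \<open>8 \<le> k\<close>] floor_log_power[of 3] by simp
  moreover have "2 ^ floor_log k \<le> k" using floor_log_exp2_le \<open>8 \<le> k\<close> by simp
  ultimately show ?thesis by (meson le_trans)
qed

lemma floor_log_ge_8: "256 \<le> n \<Longrightarrow> 8 \<le> floor_log n"
  using floor_log_le_iff[of "2^8" n] floor_log_power[of 8] by simp

lemma heights_sum:
  assumes "256 \<le> n"
  shows "top_height n + gadget_height n + 3 = floor_log n"
  using floor_log_plus_4_le[OF floor_log_ge_8[OF assms]]
  unfolding top_height_def gadget_height_def by simp

lemma top_height_le: "top_height n \<le> 2 ^ gadget_height n"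
  using floor_log_exp2_gt[of "floor_log n"] unfolding top_height_def gadget_height_def by simp

lemma floor_log_bounds: "0 < n \<Longrightarrow> 2 ^ floor_log n \<le> n \<and> n < 2 * 2 ^ floor_log n"
  using floor_log_exp2_le floor_log_exp2_gt by simp

text \<open>\<open>2^(k-1) \<le> |t_n| + 1 \<le> 2^k\<close>, because \<open>d \<le> 2^(d+2)\<close>.\<close>

lemma tsize_family:
  assumes "256 \<le> n"
  shows "tsize (family n) \<le> n" "n \<le> 8 * tsize (family n)"
proof -
  let ?H = "top_height n" and ?d = "gadget_height n" and ?k = "floor_log n"
  let ?m = "2^?H * 2^(?d+2) :: nat"
  have eq: "tsize (family n) + 1 = 2^?H * (?d + 2^(?d+2))"
    unfolding family_def by (rule tsize_tree)
  have pow: "2^?k = 2 * ?m"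
    unfolding heights_sum[OF assms, symmetric] by (simp add: power_add)
  have k: "2 ^ ?k \<le> n" "n < 2 * 2 ^ ?k" using floor_log_bounds assms by simp_all
  have "?d \<le> 2^(?d+2)"
    using less_exp[of ?d] power_increasing[of ?d "?d+2" "2::nat"] by linarith
  then have "2^?H * (?d + 2^(?d+2)) \<le> 2^?H * (2 * 2^(?d+2))" by simp
  also have "\<dots> = 2 * ?m" by simp
  finally show "tsize (family n) \<le> n" using eq pow k by linarith
  have "?m \<le> 2^?H * (?d + 2^(?d+2))" by simp
  then show "n \<le> 8 * tsize (family n)" using eq pow k assms by linarith
qed

text \<open>\<open>dag_size t_n \<ge> 2^H (d+1)\<close>, and \<open>2^H \<ge> n / (32 k)\<close>, \<open>d + 1 \<ge> log2 (log2 n - 1)\<close>.\<close>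

lemma dag_size_family:
  assumes "256 \<le> n"
  shows "real n * log 2 (log 2 (real n) - 1) / (32 * log 2 (real n)) \<le> real (dag_size (family n))"
proof -
  let ?H = "top_height n" and ?d = "gadget_height n" and ?k = "floor_log n"
  define x where "x = log 2 (real n)"
  have k8: "8 \<le> ?k" by (rule floor_log_ge_8[OF assms])
  have k: "2 ^ ?k \<le> n" "n < 2 * 2 ^ ?k" using floor_log_bounds assms by simp_all
  have xk: "real ?k \<le> x" "x < real ?k + 1"
    using le_log2_of_power[OF k(1)] log2_of_power_less[of n "Suc ?k"] k(2) assms
    by (simp_all add: x_def)
  have d: "?k < 2 ^ ?d" "2 ^ ?d \<le> 2 * ?k"
    using floor_log_exp2_gt[of ?k] floor_log_exp2_le[of ?k] k8 by (simp_all add: gadget_height_def)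
  have "n < 2^?H * (16 * 2^?d)"
    using k(2) unfolding heights_sum[OF assms, symmetric] by (simp add: power_add)
  also have "\<dots> \<le> 2^?H * (32 * ?k)" using d(2) by simp
  finally have "real n \<le> real (2^?H * (32 * ?k))" by (simp only: of_nat_le_iff less_imp_le)
  then have n: "real n \<le> 2^?H * (32 * real ?k)" by simp
  have lg: "log 2 (x - 1) \<le> real ?d"
  proof -
    have "log 2 (x - 1) \<le> log 2 (real ?k)" using xk k8 by simp
    also have "\<dots> < real ?d" using log2_of_power_less[OF d(1)] k8 by simp
    finally show ?thesis by simp
  qed
  have lpos: "0 \<le> log 2 (x - 1)" using xk k8 by simp
  have kpos: "0 < real ?k" using k8 by simp
  have "real n * log 2 (x - 1) / (32 * x) \<le> real n * log 2 (x - 1) / (32 * real ?k)"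
  proof (rule divide_left_mono)
    show "32 * real ?k \<le> 32 * x" using xk by simp
    show "0 \<le> real n * log 2 (x - 1)" using lpos by simp
    show "0 < 32 * x * (32 * real ?k)" using kpos xk by simp
  qed
  also have "\<dots> \<le> 2^?H * (32 * real ?k) * log 2 (x - 1) / (32 * real ?k)"
    using kpos by (intro divide_right_mono mult_right_mono[OF n lpos]) simp
  also have "\<dots> = 2^?H * log 2 (x - 1)" using kpos by simp
  also have "\<dots> \<le> 2^?H * (real ?d + 1)" using lg by simp
  also have "\<dots> = real (2^?H * (?d + 1))" by (simp add: algebra_simps)
  also have "\<dots> \<le> real (dag_size (family n))"
    using dag_size_tree[OF top_height_le, of n] unfolding family_def by (simp only: of_nat_le_iff)
  finally show ?thesis unfolding x_def .
qed

lemma family_size_theta: "(\<lambda>n. real (tsize (family n))) \<in> \<Theta>(\<lambda>n. real n)"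
proof (rule bigthetaI'[of "1/8" 1])
  show "eventually (\<lambda>n. 1/8 * norm (real n) \<le> norm (real (tsize (family n))) \<and>
      norm (real (tsize (family n))) \<le> 1 * norm (real n)) at_top"
    using eventually_ge_at_top[of "256::nat"]
  proof eventually_elim
    case (elim n)
    then show ?case using tsize_family[OF elim] by simp
  qed
qed simp_all

lemma family_dag_size_omega:
  "(\<lambda>n. real (dag_size (family n))) \<in> \<Omega>(\<lambda>n. real n * ln (ln (real n)) / ln (real n))"
proof -
  define g where "g = (\<lambda>n::nat. real n * log 2 (log 2 (real n) - 1) / (32 * log 2 (real n)))"
  have "(\<lambda>n::nat. real n * ln (ln (real n)) / ln (real n)) \<in> O(g)"
    unfolding g_def by real_asymp
  moreover have "g \<in> O(\<lambda>n. real (dag_size (family n)))"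
  proof (rule bigoI[of _ 1])
    show "eventually (\<lambda>n. norm (g n) \<le> 1 * norm (real (dag_size (family n)))) at_top"
      using eventually_ge_at_top[of "256::nat"]
    proof eventually_elim
      case (elim n)
      have "8 \<le> log 2 (real n)" using le_log2_of_power[of 8 n] elim by simp
      then have "0 \<le> g n" by (simp add: g_def)
      then show ?case using dag_size_family[OF elim] by (simp add: g_def)
    qed
  qed
  ultimately show ?thesis
    unfolding bigomega_iff_bigo by (rule landau_o.big_trans)
qed

theorem mainTheorem8:
  shows "\<exists>(t :: nat \<Rightarrow> rtree) (C :: real). C > 0 \<and>
    (\<lambda>n. real (tsize (t n))) \<in> \<Theta>(\<lambda>n. real n) \<and>
    (\<forall>n \<ge> 1. \<forall>s \<in> subtrees (t n).
        real (depth s) \<le> C * log 2 (real (tsize s) + 1)) \<and>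
    (\<lambda>n. real (dag_size (t n))) \<in> \<Omega>(\<lambda>n. real n * ln (ln (real n)) / ln (real n))"
proof (intro exI[of _ family] exI[of _ 2] conjI)
  show "\<forall>n\<ge>1. \<forall>s\<in>subtrees (family n). real (depth s) \<le> 2 * log 2 (real (tsize s) + 1)"
    unfolding family_def using balanced_tree balanced_depth_log by blast
qed (simp_all add: family_size_theta family_dag_size_omega)

end
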